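(* Let $q\ge3$ be a prime power and let $P\subseteq[0,q-2]^n$ and $Q\subseteq[0,q-2]^m$ be integral convex polytopes, each of which contains, up to a unimodular affine transformation, either a lattice segment of length at least $2$ (i.e. the lattice points $0,e_1,2e_1$ and the segment between them) or the unit square $[0,1]^2\times\{0\}$. Then $$(q-1)^{n+m}\leq (q-1)N(P)N(Q)+\big((q-1)^n-N(P)\big)\big((q-1)^m-N(Q)\big),$$ and consequently $$\delta(P*Q)=\min\Big\{\delta(P),\ \delta(Q),\ \delta(P)+\delta(Q)-\delta(P)\delta(Q)\tfrac{q}{q-1}\Big\}.$$
   Context: The join of $P\subseteq\mathbb{R}^n$ and $Q\subseteq\mathbb{R}^m$ is $P*Q=\mathrm{conv}\big(\{(p,\mathbf{0}^m,0):p\in P\}\cup\{(\mathbf{0}^n,y,1):y\in Q\}\big)\subseteq\mathbb{R}^{n+m+1}$. A unimodular affine transformation is a map $x\mapsto Mx+\lambda$ with $M\in GL(n,\mathbb{Z})$, $\lambda\in\mathbb{Z}^n$. For an integral convex polytope $P\subseteq[0,q-2]^n$, $\mathcal{L}_P=\mathrm{span}_{\mathbb{F}_q}\{x^p: p\in P\cap\mathbb{Z}^n\}$, $N(P)=\max_{0\neq f\in\mathcal{L}_P}|Z(f)|$ with $Z(f)$ the zero set of $f$ in $(\mathbb{F}_q^\times)^n$, and $\delta(P)=\big((q-1)^n-N(P)\big)/(q-1)^n$ with respect to the ambient dimension of the polytope. *)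

theory Defs
  imports Complex_Main "HOL-Library.Cardinality"
begin

(* Points of R^n / Z^n are represented as functions nat => real / nat => int
   that vanish at all indices >= n. *)

definition rvec :: "(nat \<Rightarrow> int) \<Rightarrow> (nat \<Rightarrow> real)" where
  "rvec p = (\<lambda>i. real_of_int (p i))"

definition rconv :: "(nat \<Rightarrow> real) set \<Rightarrow> (nat \<Rightarrow> real) set" where
  "rconv S = {x. \<exists>T u. finite T \<and> T \<subseteq> S \<and> T \<noteq> {} \<and> (\<forall>t\<in>T. 0 \<le> u t) \<and>
       sum u T = 1 \<and> (\<forall>i. x i = (\<Sum>t\<in>T. u t * t i))}"

definition int_polytope :: "nat \<Rightarrow> (nat \<Rightarrow> real) set \<Rightarrow> bool" where
  "int_polytope n P \<longleftrightarrow> (\<exists>V. finite V \<and> V \<noteq> {} \<and> (\<forall>v\<in>V. \<forall>i\<ge>n. v i = 0) \<and> P = rconv (rvec ` V))"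

definition box_n :: "nat \<Rightarrow> real \<Rightarrow> (nat \<Rightarrow> real) set" where
  "box_n n b = {x. \<forall>i. (i < n \<longrightarrow> 0 \<le> x i \<and> x i \<le> b) \<and> (n \<le> i \<longrightarrow> x i = 0)}"

definition join :: "nat \<Rightarrow> nat \<Rightarrow> (nat \<Rightarrow> real) set \<Rightarrow> (nat \<Rightarrow> real) set \<Rightarrow> (nat \<Rightarrow> real) set" where
  "join n m P Q = rconv ((\<lambda>p i. if i < n then p i else 0) ` P \<union>
      (\<lambda>y i. if i < n then 0 else if i < n + m then y (i - n) else if i = n + m then 1 else 0) ` Q)"

definition unimodular :: "nat \<Rightarrow> (nat \<Rightarrow> nat \<Rightarrow> int) \<Rightarrow> bool" where
  "unimodular n M \<longleftrightarrow> (\<exists>M'. \<forall>i<n. \<forall>j<n. (\<Sum>k<n. M i k * M' k j) = (if i = j then 1 else 0))"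

definition aff_map :: "nat \<Rightarrow> (nat \<Rightarrow> nat \<Rightarrow> int) \<Rightarrow> (nat \<Rightarrow> int) \<Rightarrow> (nat \<Rightarrow> real) \<Rightarrow> (nat \<Rightarrow> real)" where
  "aff_map n M lam x = (\<lambda>i. if i < n then (\<Sum>j<n. real_of_int (M i j) * x j) + real_of_int (lam i) else 0)"

definition unit_vec :: "nat \<Rightarrow> (nat \<Rightarrow> real)" where
  "unit_vec k = (\<lambda>i. if i = k then 1 else 0)"

definition seg2 :: "(nat \<Rightarrow> real) set" where
  "seg2 = rconv {(\<lambda>i. 0), (\<lambda>i. 2 * unit_vec 0 i)}"

definition unit_square :: "(nat \<Rightarrow> real) set" where
  "unit_square = rconv {(\<lambda>i. 0), unit_vec 0, unit_vec 1, (\<lambda>i. unit_vec 0 i + unit_vec 1 i)}"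

definition contains_seg_or_square :: "nat \<Rightarrow> (nat \<Rightarrow> real) set \<Rightarrow> bool" where
  "contains_seg_or_square n P \<longleftrightarrow> (\<exists>M lam. unimodular n M \<and> (\<forall>i\<ge>n. lam i = 0) \<and>
      ((1 \<le> n \<and> aff_map n M lam ` seg2 \<subseteq> P) \<or> (2 \<le> n \<and> aff_map n M lam ` unit_square \<subseteq> P)))"

definition lattice_pts :: "nat \<Rightarrow> (nat \<Rightarrow> real) set \<Rightarrow> (nat \<Rightarrow> int) set" where
  "lattice_pts n S = {p. (\<forall>i\<ge>n. p i = 0) \<and> rvec p \<in> S}"

definition torus :: "nat \<Rightarrow> (nat \<Rightarrow> 'a::field) set" where
  "torus n = {x. (\<forall>i<n. x i \<noteq> 0) \<and> (\<forall>i\<ge>n. x i = 0)}"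

definition monomial_eval :: "nat \<Rightarrow> (nat \<Rightarrow> int) \<Rightarrow> (nat \<Rightarrow> 'a::field) \<Rightarrow> 'a" where
  "monomial_eval n p x = (\<Prod>i<n. x i ^ nat (p i))"

definition poly_eval :: "nat \<Rightarrow> (nat \<Rightarrow> real) set \<Rightarrow> ((nat \<Rightarrow> int) \<Rightarrow> 'a::field) \<Rightarrow> (nat \<Rightarrow> 'a) \<Rightarrow> 'a" where
  "poly_eval n P c x = (\<Sum>p\<in>lattice_pts n P. c p * monomial_eval n p x)"

definition zero_set :: "nat \<Rightarrow> (nat \<Rightarrow> real) set \<Rightarrow> ((nat \<Rightarrow> int) \<Rightarrow> 'a::field) \<Rightarrow> (nat \<Rightarrow> 'a) set" where
  "zero_set n P c = {x \<in> torus n. poly_eval n P c x = 0}"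

definition max_zeros :: "'a::{finite,field} itself \<Rightarrow> nat \<Rightarrow> (nat \<Rightarrow> real) set \<Rightarrow> nat" where
  "max_zeros TYPE('a) n P =
     Max {card (zero_set n P c) | c :: (nat \<Rightarrow> int) \<Rightarrow> 'a. \<exists>p\<in>lattice_pts n P. c p \<noteq> 0}"

definition min_dist :: "'a::{finite,field} itself \<Rightarrow> nat \<Rightarrow> (nat \<Rightarrow> real) set \<Rightarrow> real" where
  "min_dist TYPE('a) n P =
     (real ((CARD('a) - 1) ^ n) - real (max_zeros TYPE('a) n P)) / real ((CARD('a) - 1) ^ n)"

end

theory Submission
  imports "Jordan_Normal_Form.Determinant" "HOL-Library.FuncSet" Defs
begin

text \<open>
  A polynomial on the join \<open>P * Q\<close> has the form \<open>g(x) + z h(y)\<close> with \<open>g \<in> L_P\<close> and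
  \<open>h \<in> L_Q\<close>. For a fixed point \<open>(x, y)\<close> of the torus the number of \<open>z \<noteq> 0\<close> with
  \<open>g(x) + z h(y) = 0\<close> is \<open>q - 1\<close>, \<open>1\<close> or \<open>0\<close>, according as both, none or one of \<open>g(x)\<close>,
  \<open>h(y)\<close> vanish, so the number of zeros is \<open>F(|Z(g)|, |Z(h)|)\<close> with
  \<open>F(x, y) = (q-1) x y + ((q-1)^n - x) ((q-1)^m - y)\<close>. As \<open>F\<close> is affine in each variable and
  \<open>g = 0\<close> forces \<open>|Z(g)| = (q-1)^n\<close>, the maximum \<open>N(P * Q)\<close> is the largest value of \<open>F\<close> at the
  corners \<open>(N(P), N(Q))\<close>, \<open>(N(P), (q-1)^m)\<close>, \<open>((q-1)^n, N(Q))\<close>, provided the value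
  \<open>(q-1)^(n+m)\<close> at \<open>(0, 0)\<close> does not exceed \<open>F(N(P), N(Q))\<close>. This inequality follows from
  \<open>q N(P) \<ge> 2 (q-1)^n\<close>: the segment or the square provides lattice points with
  \<open>p00 + p11 = p10 + p01\<close>, so that \<open>x^p11 - b x^p10 - a x^p01 + a b x^p00\<close> factors as
  \<open>x^p00 (u - a) (v - b)\<close> with \<open>u, v\<close> Laurent monomials, and averaging over \<open>(a, b)\<close> yields
  one with many zeros.
\<close>

section \<open>The torus and lattice points\<close>

definition take_vec :: "nat \<Rightarrow> (nat \<Rightarrow> 'b) \<Rightarrow> nat \<Rightarrow> 'b::zero" where
  "take_vec n f = (\<lambda>i. if i < n then f i else 0)"

lemma bij_betw_restrict_torus:
  "bij_betw (\<lambda>x. restrict x {..<n}) (torus n :: (nat \<Rightarrow> 'a::field) set) (PiE {..<n} (\<lambda>_. UNIV - {0}))"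
proof (rule bij_betw_byWitness[where f' = "take_vec n"])
  show "\<forall>x\<in>torus n. take_vec n (restrict x {..<n}) = (x :: nat \<Rightarrow> 'a)"
    by (auto simp: torus_def take_vec_def)
  show "\<forall>y\<in>PiE {..<n} (\<lambda>_. UNIV - {0::'a}). restrict (take_vec n y) {..<n} = y"
  proof
    fix y :: "nat \<Rightarrow> 'a" assume "y \<in> PiE {..<n} (\<lambda>_. UNIV - {0})"
    then show "restrict (take_vec n y) {..<n} = y"
      by (metis PiE_restrict lessThan_iff restrict_ext take_vec_def)
  qed
  show "(\<lambda>x. restrict x {..<n}) ` torus n \<subseteq> PiE {..<n} (\<lambda>_. UNIV - {0::'a})"
    by (rule image_subsetI) (simp add: torus_def)
  show "take_vec n ` PiE {..<n} (\<lambda>_. UNIV - {0::'a}) \<subseteq> torus n"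
    by (rule image_subsetI) (simp add: torus_def take_vec_def PiE_iff)
qed

lemma finite_torus: "finite (torus n :: (nat \<Rightarrow> 'a::{finite,field}) set)"
  using bij_betw_finite[OF bij_betw_restrict_torus[of n, where 'a='a]] by (simp add: finite_PiE)

lemma card_torus: "card (torus n :: (nat \<Rightarrow> 'a::{finite,field}) set) = (CARD('a) - 1) ^ n"
  using bij_betw_same_card[OF bij_betw_restrict_torus[of n, where 'a='a]]
  by (simp add: card_PiE card_Diff_singleton)

lemma lattice_pts_box:
  assumes "P \<subseteq> box_n n b" "p \<in> lattice_pts n P"
  shows "\<forall>i. (i < n \<longrightarrow> 0 \<le> p i \<and> real_of_int (p i) \<le> b) \<and> (n \<le> i \<longrightarrow> p i = 0)"
  using assms by (auto simp: lattice_pts_def box_n_def rvec_def subset_iff)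

lemma box_n_vanishes: "P \<subseteq> box_n n b \<Longrightarrow> x \<in> P \<Longrightarrow> n \<le> i \<Longrightarrow> x i = 0"
  by (auto simp: box_n_def)

lemma finite_lattice_pts:
  assumes "P \<subseteq> box_n n b"
  shows "finite (lattice_pts n P)"
proof (rule finite_subset)
  show "lattice_pts n P \<subseteq> take_vec n ` PiE {..<n} (\<lambda>_. {0..\<lceil>b\<rceil>})"
  proof
    fix p assume p: "p \<in> lattice_pts n P"
    note bounds = lattice_pts_box[OF assms p]
    have "p = take_vec n (restrict p {..<n})"
      using bounds by (auto simp: take_vec_def)
    moreover have "restrict p {..<n} \<in> PiE {..<n} (\<lambda>_. {0..\<lceil>b\<rceil>})"
      using bounds by (auto simp: le_ceiling_iff ceiling_le_iff)
    ultimately show "p \<in> take_vec n ` PiE {..<n} (\<lambda>_. {0..\<lceil>b\<rceil>})" by (rule image_eqI)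
  qed
qed (intro finite_imageI finite_PiE; simp)

lemma monomial_eval_nonzero: "x \<in> torus n \<Longrightarrow> monomial_eval n p x \<noteq> (0::'a::field)"
  by (auto simp: monomial_eval_def torus_def)

lemma zero_set_subset_torus: "zero_set n P c \<subseteq> torus n"
  by (auto simp: zero_set_def)

lemma card_zero_set_le: "card (zero_set n P (c :: _ \<Rightarrow> 'a::{finite,field})) \<le> (CARD('a) - 1) ^ n"
  using card_mono[OF finite_torus zero_set_subset_torus] card_torus by metis

lemma zero_set_cong:
  "(\<And>p. p \<in> lattice_pts n P \<Longrightarrow> c p = c' p) \<Longrightarrow> zero_set n P c = zero_set n P c'"
  unfolding zero_set_def poly_eval_def by (simp cong: sum.cong)

lemma zero_set_zero:
  "(\<And>p. p \<in> lattice_pts n P \<Longrightarrow> c p = 0) \<Longrightarrow> zero_set n P c = torus n"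
  unfolding zero_set_def poly_eval_def by simp

lemma finite_zero_set_cards:
  "finite {card (zero_set n P c) | c :: (nat \<Rightarrow> int) \<Rightarrow> 'a::{finite,field}. \<exists>p\<in>lattice_pts n P. c p \<noteq> 0}"
  by (rule finite_subset[of _ "{..(CARD('a) - 1) ^ n}"]) (auto simp del: One_nat_def intro: card_zero_set_le)

lemma card_zero_set_le_max_zeros:
  fixes c :: "(nat \<Rightarrow> int) \<Rightarrow> 'a::{finite,field}"
  assumes "\<exists>p\<in>lattice_pts n P. c p \<noteq> 0"
  shows "card (zero_set n P c) \<le> max_zeros TYPE('a) n P"
  unfolding max_zeros_def by (rule Max_ge[OF finite_zero_set_cards]) (use assms in blast)

lemma max_zeros_attained:
  assumes "lattice_pts n P \<noteq> {}"
  obtains c :: "(nat \<Rightarrow> int) \<Rightarrow> 'a::{finite,field}"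
  where "\<exists>p\<in>lattice_pts n P. c p \<noteq> 0" "card (zero_set n P c) = max_zeros TYPE('a) n P"
proof -
  let ?S = "{card (zero_set n P c) | c :: (nat \<Rightarrow> int) \<Rightarrow> 'a. \<exists>p\<in>lattice_pts n P. c p \<noteq> 0}"
  have "?S \<noteq> {}" using assms by (auto intro!: exI[of _ "\<lambda>_. 1"])
  from Max_in[OF finite_zero_set_cards this] have "\<exists>c :: (nat \<Rightarrow> int) \<Rightarrow> 'a.
      (\<exists>p\<in>lattice_pts n P. c p \<noteq> 0) \<and> card (zero_set n P c) = max_zeros TYPE('a) n P"
    unfolding max_zeros_def by auto
  with that show ?thesis by blast
qed

lemma max_zeros_le:
  assumes "lattice_pts n P \<noteq> {}"
  shows "max_zeros TYPE('a::{finite,field}) n P \<le> (CARD('a) - 1) ^ n"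
  using max_zeros_attained[OF assms, where 'a='a] card_zero_set_le by metis

section \<open>Convex hulls\<close>

lemma rconv_inc: "x \<in> S \<Longrightarrow> x \<in> rconv S"
  unfolding rconv_def by (intro CollectI exI[of _ "{x}"] exI[of _ "\<lambda>_. 1"]) auto

lemma rconv_finite_weights:
  assumes S: "finite S" and x: "x \<in> rconv S"
  obtains w where "\<forall>s\<in>S. 0 \<le> w s" "sum w S = 1" "\<forall>i. x i = (\<Sum>s\<in>S. w s * s i)"
proof -
  from x obtain T u where T: "finite T" "T \<subseteq> S" "\<forall>t\<in>T. 0 \<le> u t" "sum u T = 1"
    "\<forall>i. x i = (\<Sum>t\<in>T. u t * t i)" unfolding rconv_def by blast
  define w where "w s = (if s \<in> T then u s else 0)" for s
  have "sum w S = sum u T"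
    using S T(2) by (simp add: w_def sum.If_cases Int_absorb1)
  moreover have "(\<Sum>s\<in>S. w s * s i) = (\<Sum>t\<in>T. u t * t i)" for i
  proof -
    have "(\<Sum>s\<in>S. w s * s i) = (\<Sum>s\<in>S. if s \<in> T then u s * s i else 0)"
      by (intro sum.cong) (auto simp: w_def)
    also have "\<dots> = (\<Sum>t\<in>T. u t * t i)"
      using S T(2) by (simp add: sum.If_cases Int_absorb1)
    finally show ?thesis .
  qed
  ultimately show ?thesis using T by (intro that[of w]) (auto simp: w_def)
qed

lemma rconv_convex_comb:
  assumes S: "finite S" and T: "finite T" "T \<subseteq> rconv S" "T \<noteq> {}"
    and u: "\<forall>t\<in>T. 0 \<le> u t" "sum u T = 1"
  shows "(\<lambda>i. \<Sum>t\<in>T. u t * t i) \<in> rconv S"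
proof -
  have "\<forall>t\<in>T. \<exists>w. (\<forall>s\<in>S. 0 \<le> w s) \<and> sum w S = 1 \<and> (\<forall>i. t i = (\<Sum>s\<in>S. w s * s i))"
    using rconv_finite_weights[OF S] T(2) by (metis subsetD)
  then obtain W where W: "\<forall>t\<in>T. (\<forall>s\<in>S. 0 \<le> W t s) \<and> sum (W t) S = 1 \<and>
      (\<forall>i. t i = (\<Sum>s\<in>S. W t s * s i))" by metis
  have "S \<noteq> {}" using T W by fastforce
  define V where "V s = (\<Sum>t\<in>T. u t * W t s)" for s
  have "\<forall>s\<in>S. 0 \<le> V s" unfolding V_def using W u by (auto intro!: sum_nonneg)
  moreover have "sum V S = 1"
  proof -
    have "sum V S = (\<Sum>t\<in>T. u t * sum (W t) S)"
      unfolding V_def by (simp add: sum_distrib_left sum.swap[of _ S])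
    also have "\<dots> = 1" using W u by simp
    finally show ?thesis .
  qed
  moreover have "(\<Sum>t\<in>T. u t * t i) = (\<Sum>s\<in>S. V s * s i)" for i
  proof -
    have "(\<Sum>t\<in>T. u t * t i) = (\<Sum>t\<in>T. u t * (\<Sum>s\<in>S. W t s * s i))"
      using W by (intro sum.cong) auto
    also have "\<dots> = (\<Sum>s\<in>S. V s * s i)"
      unfolding V_def by (simp add: sum_distrib_left sum_distrib_right sum.swap[of _ S] ac_simps)
    finally show ?thesis .
  qed
  ultimately show ?thesis
    unfolding rconv_def using S \<open>S \<noteq> {}\<close> by blast
qed

lemma rconv_int_polytope:
  assumes "int_polytope n P"
  shows "rconv P = P"
proof
  from assms obtain V where V: "finite V" "P = rconv (rvec ` V)"
    unfolding int_polytope_def by blast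
  show "rconv P \<subseteq> P"
  proof
    fix x assume "x \<in> rconv P"
    then obtain T u where T: "finite T" "T \<subseteq> P" "T \<noteq> {}" "\<forall>t\<in>T. 0 \<le> u t" "sum u T = 1"
      and x: "\<forall>i. x i = (\<Sum>t\<in>T. u t * t i)" unfolding rconv_def by blast
    have "(\<lambda>i. \<Sum>t\<in>T. u t * t i) \<in> P"
      using rconv_convex_comb[of "rvec ` V" T u] T V by simp
    moreover have "x = (\<lambda>i. \<Sum>t\<in>T. u t * t i)" using x by auto
    ultimately show "x \<in> P" by simp
  qed
qed (auto intro: rconv_inc)

lemma rconv_coord_bounds:
  assumes "\<forall>s\<in>S. lo \<le> s k \<and> s k \<le> hi" and "x \<in> rconv S"
  shows "lo \<le> x k \<and> x k \<le> hi"
proof -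
  from assms(2) obtain T u where T: "T \<subseteq> S" "\<forall>t\<in>T. 0 \<le> u t" "sum u T = 1"
    and x: "x k = (\<Sum>t\<in>T. u t * t k)" unfolding rconv_def by blast
  have "(\<Sum>t\<in>T. u t * lo) \<le> (\<Sum>t\<in>T. u t * t k)" "(\<Sum>t\<in>T. u t * t k) \<le> (\<Sum>t\<in>T. u t * hi)"
    using assms(1) T by (auto intro!: sum_mono mult_left_mono)
  with T(3) show ?thesis unfolding x by (simp flip: sum_distrib_right)
qed

lemma rconv_face:
  assumes S: "\<forall>s\<in>S. s k = a \<or> s k = b" and "a \<noteq> b" and x: "x \<in> rconv S" "x k = a"
  shows "x \<in> rconv {s\<in>S. s k = a}"
proof -
  from x(1) obtain T u where T: "finite T" "T \<subseteq> S" "\<forall>t\<in>T. 0 \<le> u t" "sum u T = 1"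
    and xT: "\<forall>i. x i = (\<Sum>t\<in>T. u t * t i)" unfolding rconv_def by blast
  define B where "B = {t\<in>T. t k \<noteq> a}"
  have "x k - a = (\<Sum>t\<in>T. u t * t k) - (\<Sum>t\<in>T. u t) * a"
    using xT T(4) by simp
  also have "\<dots> = (\<Sum>t\<in>T. u t * (t k - a))"
    by (simp add: right_diff_distrib sum_subtractf sum_distrib_right)
  also have "(\<Sum>t\<in>T. u t * (t k - a)) = (\<Sum>t\<in>B. u t) * (b - a)"
    unfolding B_def sum_distrib_right using T(1) S T(2)
    by (intro sum.mono_neutral_cong_right) auto
  finally have "sum u B = 0" using x(2) \<open>a \<noteq> b\<close> by simp
  then have uB: "\<forall>t\<in>B. u t = 0"
    using T(1,3) by (subst (asm) sum_nonneg_eq_0_iff) (auto simp: B_def)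
  have "(\<Sum>t\<in>T - B. u t * t i) = (\<Sum>t\<in>T. u t * t i)" for i
    using T(1) uB by (intro sum.mono_neutral_left) auto
  moreover have sum1: "sum u (T - B) = 1"
    using T(1,4) uB by (subst sum.mono_neutral_left) auto
  moreover have "T - B \<noteq> {}" using sum1 by (metis sum.empty zero_neq_one)
  moreover have "T - B \<subseteq> {s\<in>S. s k = a}" using T(2) by (auto simp: B_def)
  ultimately show ?thesis
    unfolding rconv_def using T xT by (intro CollectI exI[of _ "T - B"] exI[of _ u]) auto
qed

section \<open>The join and its polynomials\<close>

definition join_vec :: "nat \<Rightarrow> nat \<Rightarrow> (nat \<Rightarrow> 'b) \<Rightarrow> (nat \<Rightarrow> 'b) \<Rightarrow> 'b \<Rightarrow> nat \<Rightarrow> 'b::zero" where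
  "join_vec n m x y z =
     (\<lambda>i. if i < n then x i else if i < n + m then y (i - n) else if i = n + m then z else 0)"

abbreviation join_lift :: "nat \<Rightarrow> nat \<Rightarrow> (nat \<Rightarrow> 'b) \<Rightarrow> nat \<Rightarrow> 'b::zero_neq_one" where
  "join_lift n m y \<equiv> join_vec n m (\<lambda>_. 0) y 1"

definition slice_vec :: "nat \<Rightarrow> nat \<Rightarrow> (nat \<Rightarrow> 'b) \<Rightarrow> nat \<Rightarrow> 'b::zero" where
  "slice_vec n m w = (\<lambda>i. if i < m then w (n + i) else 0)"

lemma rconv_join_lift_image:
  assumes "x \<in> rconv (join_lift n m ` Q)"
  obtains y where "y \<in> rconv Q" "x = join_lift n m y"
proof -
  from assms obtain T u where T: "finite T" "T \<subseteq> join_lift n m ` Q" "T \<noteq> {}" "\<forall>t\<in>T. 0 \<le> u t"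
    "sum u T = 1" and xT: "\<forall>i. x i = (\<Sum>t\<in>T. u t * t i)" unfolding rconv_def by blast
  from T(2) obtain U where U: "U \<subseteq> Q" "inj_on (join_lift n m) U" "T = join_lift n m ` U"
    unfolding subset_image_inj by blast
  define y where "y i = (\<Sum>q\<in>U. u (join_lift n m q) * q i)" for i
  have sums: "sum f T = (\<Sum>q\<in>U. f (join_lift n m q))" for f :: "_ \<Rightarrow> real"
    unfolding U(3) by (rule sum.reindex[OF U(2), unfolded comp_def])
  have "y \<in> rconv Q"
    unfolding rconv_def y_def using T U sums[of u] by (intro CollectI exI[of _ U]) auto
  moreover have "x = join_lift n m y"
  proof
    fix i
    have "x i = (\<Sum>q\<in>U. u (join_lift n m q) * join_lift n m q i)"
      using xT sums by simp
    also have "\<dots> = join_lift n m y i"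
      using T(5) sums[of u] by (auto simp: join_vec_def y_def)
    finally show "x i = join_lift n m y i" .
  qed
  ultimately show ?thesis by (rule that)
qed

lemma rvec_join_lift: "rvec (join_lift n m q) = join_lift n m (rvec q)"
  by (auto simp: rvec_def join_vec_def)

lemma rvec_slice_vec: "rvec (slice_vec n m q) = slice_vec n m (rvec q)"
  by (auto simp: rvec_def slice_vec_def)

lemma inj_rvec: "inj rvec"
  by (auto intro!: injI simp: rvec_def fun_eq_iff)

lemma slice_vec_join_vec: "\<forall>i\<ge>m. y i = 0 \<Longrightarrow> slice_vec n m (join_vec n m x y z) = y"
  by (auto simp: slice_vec_def join_vec_def)

lemma join_eq_rconv:
  assumes "P \<subseteq> box_n n b"
  shows "join n m P Q = rconv (P \<union> join_lift n m ` Q)"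
proof -
  have "(\<lambda>i. if i < n then p i else 0) = p" if "p \<in> P" for p
    using box_n_vanishes[OF assms that] by auto
  then have "(\<lambda>p i. if i < n then p i else 0) ` P = P"
    by (simp cong: image_cong)
  then show ?thesis unfolding join_def join_vec_def by simp
qed

lemma join_apex_coordinate:
  assumes P: "int_polytope n P" "P \<subseteq> box_n n b" and Q: "int_polytope m Q"
    and x: "x \<in> join n m P Q"
  shows "0 \<le> x (n+m) \<and> x (n+m) \<le> 1"
    and "x (n+m) = 0 \<Longrightarrow> x \<in> P"
    and "x (n+m) = 1 \<Longrightarrow> \<exists>y\<in>Q. x = join_lift n m y"
proof -
  let ?S = "P \<union> join_lift n m ` Q"
  have x: "x \<in> rconv ?S" using x unfolding join_eq_rconv[OF P(2)] .
  have P_apex: "\<forall>s\<in>P. s (n+m) = 0" using box_n_vanishes[OF P(2)] by simp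
  then have apex: "\<forall>s\<in>?S. s (n+m) = 0 \<or> s (n+m) = 1" by (auto simp: join_vec_def)
  have "\<forall>s\<in>?S. 0 \<le> s (n+m) \<and> s (n+m) \<le> 1"
  proof
    fix s assume "s \<in> ?S"
    then have "s (n+m) = 0 \<or> s (n+m) = 1" using apex by blast
    then show "0 \<le> s (n+m) \<and> s (n+m) \<le> 1" by auto
  qed
  from rconv_coord_bounds[OF this x] show "0 \<le> x (n+m) \<and> x (n+m) \<le> 1" .
  show "x \<in> P" if "x (n+m) = 0"
  proof -
    have "x \<in> rconv {s\<in>?S. s (n+m) = 0}" by (rule rconv_face[OF apex _ x that]) simp
    also have "{s\<in>?S. s (n+m) = 0} = P" using P_apex by (auto simp: join_vec_def)
    finally show ?thesis unfolding rconv_int_polytope[OF P(1)] .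
  qed
  show "\<exists>y\<in>Q. x = join_lift n m y" if "x (n+m) = 1"
  proof -
    have "\<forall>s\<in>?S. s (n+m) = 1 \<or> s (n+m) = 0" using apex by blast
    then have "x \<in> rconv {s\<in>?S. s (n+m) = 1}" by (rule rconv_face[OF _ _ x that]) simp
    also have "{s\<in>?S. s (n+m) = 1} = join_lift n m ` Q" using P_apex by (auto simp: join_vec_def)
    finally show ?thesis
      using rconv_join_lift_image rconv_int_polytope[OF Q(1)] by metis
  qed
qed

lemma lattice_pts_join:
  assumes P: "int_polytope n P" "P \<subseteq> box_n n b" and Q: "int_polytope m Q" "Q \<subseteq> box_n m b'"
  shows "lattice_pts (n+m+1) (join n m P Q) = lattice_pts n P \<union> join_lift n m ` lattice_pts m Q"
proof
  show "lattice_pts n P \<union> join_lift n m ` lattice_pts m Q \<subseteq> lattice_pts (n+m+1) (join n m P Q)"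
  proof (intro Un_least image_subsetI subsetI)
    fix p assume "p \<in> lattice_pts n P"
    then show "p \<in> lattice_pts (n+m+1) (join n m P Q)"
      unfolding join_eq_rconv[OF P(2)] by (auto simp: lattice_pts_def intro: rconv_inc)
  next
    fix q assume "q \<in> lattice_pts m Q"
    then have "rvec (join_lift n m q) \<in> P \<union> join_lift n m ` Q"
      by (simp add: rvec_join_lift lattice_pts_def)
    moreover have "\<forall>i\<ge>n+m+1. join_lift n m q i = 0" by (simp add: join_vec_def)
    ultimately show "join_lift n m q \<in> lattice_pts (n+m+1) (join n m P Q)"
      unfolding lattice_pts_def join_eq_rconv[OF P(2)] by (auto intro: rconv_inc)
  qed
  show "lattice_pts (n+m+1) (join n m P Q) \<subseteq> lattice_pts n P \<union> join_lift n m ` lattice_pts m Q"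
  proof
    fix r assume "r \<in> lattice_pts (n+m+1) (join n m P Q)"
    then have r: "rvec r \<in> join n m P Q" "\<forall>i\<ge>n+m+1. r i = 0"
      unfolding lattice_pts_def by auto
    note apex = join_apex_coordinate[OF P Q(1) r(1)]
    from apex(1) have "r (n+m) = 0 \<or> r (n+m) = 1" by (auto simp: rvec_def)
    then show "r \<in> lattice_pts n P \<union> join_lift n m ` lattice_pts m Q"
    proof
      assume "r (n+m) = 0"
      then have "rvec r \<in> P" by (intro apex(2)) (simp add: rvec_def)
      then show ?thesis
        using box_n_vanishes[OF P(2)] by (auto simp: lattice_pts_def rvec_def)
    next
      assume "r (n+m) = 1"
      then obtain y where y: "y \<in> Q" "rvec r = join_lift n m y"
        using apex(3) by (auto simp: rvec_def)
      define q where "q = slice_vec n m r"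
      have "rvec q = y"
        using y box_n_vanishes[OF Q(2) y(1)] by (simp add: q_def rvec_slice_vec slice_vec_join_vec)
      then have "q \<in> lattice_pts m Q"
        using y(1) by (auto simp: lattice_pts_def q_def slice_vec_def)
      moreover have "r = join_lift n m q"
        using y \<open>rvec q = y\<close> inj_rvec by (metis injD rvec_join_lift)
      ultimately show ?thesis by blast
    qed
  qed
qed

lemma monomial_eval_extend:
  assumes "\<forall>i\<ge>n. p i = 0" "n \<le> N"
  shows "monomial_eval N p w = monomial_eval n p (w :: nat \<Rightarrow> 'a::field)"
  unfolding monomial_eval_def using assms by (intro prod.mono_neutral_right) auto

lemma monomial_eval_take_vec:
  "monomial_eval n p (take_vec n w) = monomial_eval n p (w :: nat \<Rightarrow> 'a::field)"
  unfolding monomial_eval_def by (intro prod.cong) (auto simp: take_vec_def)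

lemma monomial_eval_join_lift:
  assumes "\<forall>i\<ge>m. q i = 0"
  shows "monomial_eval (n+m+1) (join_lift n m q) w =
    monomial_eval m q (slice_vec n m w) * (w :: nat \<Rightarrow> 'a::field) (n+m)"
proof -
  let ?f = "\<lambda>i. w i ^ nat (join_lift n m q i)"
  have "prod ?f {..<n+m+1} = prod ?f {..<n} * prod ?f {n..<n+m} * ?f (n+m)"
    by (simp add: prod.atLeastLessThan_concat[of 0 n "n+m", symmetric] lessThan_atLeast0)
  also have "prod ?f {..<n} = 1" by (intro prod.neutral) (simp add: join_vec_def)
  also have "prod ?f {n..<n+m} = (\<Prod>j<m. ?f (j + n))"
    using prod.shift_bounds_nat_ivl[of ?f 0 n m] by (simp add: lessThan_atLeast0 add.commute)
  also have "\<dots> = monomial_eval m q (slice_vec n m w)"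
    unfolding monomial_eval_def by (intro prod.cong) (auto simp: join_vec_def slice_vec_def add.commute)
  finally show ?thesis unfolding monomial_eval_def by (simp add: join_vec_def)
qed

lemma poly_eval_join:
  fixes c :: "(nat \<Rightarrow> int) \<Rightarrow> 'a::field"
  assumes P: "int_polytope n P" "P \<subseteq> box_n n b" and Q: "int_polytope m Q" "Q \<subseteq> box_n m b'"
  shows "poly_eval (n+m+1) (join n m P Q) c w =
     poly_eval n P c (take_vec n w) + w (n+m) * poly_eval m Q (c \<circ> join_lift n m) (slice_vec n m w)"
proof -
  let ?LP = "lattice_pts n P" and ?LQ = "lattice_pts m Q"
  have fin: "finite ?LP" "finite ?LQ" using finite_lattice_pts P(2) Q(2) by blast+
  have zP: "\<forall>i\<ge>n. p i = 0" if "p \<in> ?LP" for p using lattice_pts_box[OF P(2) that] by auto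
  have zQ: "\<forall>i\<ge>m. q i = 0" if "q \<in> ?LQ" for q using lattice_pts_box[OF Q(2) that] by auto
  have inj: "inj_on (join_lift n m) ?LQ"
    by (rule inj_on_inverseI[of _ "slice_vec n m"]) (simp add: zQ slice_vec_join_vec)
  have "p (n+m) \<noteq> join_lift n m q (n+m)" if "p \<in> ?LP" for p q
    using zP[OF that] by (simp add: join_vec_def)
  then have disj: "?LP \<inter> join_lift n m ` ?LQ = {}" by blast
  have "poly_eval (n+m+1) (join n m P Q) c w =
     (\<Sum>p\<in>?LP. c p * monomial_eval (n+m+1) p w) +
     (\<Sum>r\<in>join_lift n m ` ?LQ. c r * monomial_eval (n+m+1) r w)"
    unfolding poly_eval_def lattice_pts_join[OF P Q] using fin disj by (simp add: sum.union_disjoint)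
  also have "(\<Sum>p\<in>?LP. c p * monomial_eval (n+m+1) p w) = poly_eval n P c (take_vec n w)"
    unfolding poly_eval_def monomial_eval_take_vec using zP
    by (intro sum.cong refl) (simp add: monomial_eval_extend)
  also have "(\<Sum>r\<in>join_lift n m ` ?LQ. c r * monomial_eval (n+m+1) r w) =
      (\<Sum>q\<in>?LQ. c (join_lift n m q) * monomial_eval (n+m+1) (join_lift n m q) w)"
    by (rule sum.reindex[OF inj, unfolded comp_def])
  also have "\<dots> = w (n+m) * poly_eval m Q (c \<circ> join_lift n m) (slice_vec n m w)"
    unfolding poly_eval_def sum_distrib_left
  proof (intro sum.cong refl)
    fix q assume "q \<in> ?LQ"
    show "c (join_lift n m q) * monomial_eval (n+m+1) (join_lift n m q) w =
        w (n+m) * ((c \<circ> join_lift n m) q * monomial_eval m q (slice_vec n m w))"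
      by (simp only: monomial_eval_join_lift[OF zQ[OF \<open>q \<in> ?LQ\<close>]] comp_def) (simp add: ac_simps)
  qed
  finally show ?thesis .
qed

section \<open>Counting zeros on the join\<close>

lemma bij_betw_split_torus:
  "bij_betw (\<lambda>w. ((take_vec n w, slice_vec n m w), w (n+m)))
     (torus (n+m+1) :: (nat \<Rightarrow> 'a::field) set) ((torus n \<times> torus m) \<times> (UNIV - {0}))"
proof (rule bij_betw_byWitness[where f' = "\<lambda>t. join_vec n m (fst (fst t)) (snd (fst t)) (snd t)"],
    goal_cases)
  case 1 show ?case by (auto simp: torus_def join_vec_def take_vec_def slice_vec_def fun_eq_iff)
  case 2 show ?case by (auto simp: torus_def join_vec_def take_vec_def slice_vec_def fun_eq_iff)
  case 3 show ?case by (auto simp: torus_def take_vec_def slice_vec_def)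
  case 4 show ?case by (auto simp: torus_def join_vec_def split: if_splits)
qed

lemma card_nonzero_roots_affine:
  fixes a b :: "'a::{finite,field}"
  shows "card {z. z \<noteq> 0 \<and> a + z * b = 0} =
     (if a = 0 \<and> b = 0 then CARD('a) - 1 else if a \<noteq> 0 \<and> b \<noteq> 0 then 1 else 0)"
proof (cases "b = 0")
  case True
  have "{z::'a. z \<noteq> 0} = UNIV - {0}" by auto
  with True show ?thesis by (simp add: card_Diff_singleton)
next
  case False
  then have "{z. z \<noteq> 0 \<and> a + z * b = 0} = (if a = 0 then {} else {- a / b})"
    by (auto simp: field_simps eq_neg_iff_add_eq_0)
  then show ?thesis using False by simp
qed

lemma card_roots_affine_combination:
  fixes g :: "'x \<Rightarrow> 'a::{finite,field}" and h :: "'y \<Rightarrow> 'a"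
  assumes X: "finite X" and Y: "finite Y"
  shows "card {t \<in> (X \<times> Y) \<times> (UNIV - {0}). g (fst (fst t)) + snd t * h (snd (fst t)) = 0} =
     (CARD('a) - 1) * card {x\<in>X. g x = 0} * card {y\<in>Y. h y = 0}
     + card {x\<in>X. g x \<noteq> 0} * card {y\<in>Y. h y \<noteq> 0}"
proof -
  let ?T = "CARD('a) - 1"
  have "{t \<in> (X \<times> Y) \<times> (UNIV - {0}). g (fst (fst t)) + snd t * h (snd (fst t)) = 0} =
     Sigma (X \<times> Y) (\<lambda>(x,y). {z. z \<noteq> 0 \<and> g x + z * h y = 0})" by auto
  then have "card {t \<in> (X \<times> Y) \<times> (UNIV - {0}). g (fst (fst t)) + snd t * h (snd (fst t)) = 0}
     = (\<Sum>(x,y)\<in>X \<times> Y. card {z. z \<noteq> 0 \<and> g x + z * h y = 0})"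
    using X Y by (simp add: case_prod_beta)
  also have "\<dots> = (\<Sum>(x,y)\<in>X \<times> Y. (if g x = 0 then ?T * (if h y = 0 then 1 else 0)
        else (if h y \<noteq> 0 then 1 else 0)))"
    by (intro sum.cong refl) (auto simp: card_nonzero_roots_affine)
  also have "\<dots> = (\<Sum>x\<in>X. \<Sum>y\<in>Y. (if g x = 0 then ?T * (if h y = 0 then 1 else 0)
        else (if h y \<noteq> 0 then 1 else 0)))"
    by (simp add: sum.cartesian_product)
  also have "\<dots> = (\<Sum>x\<in>X. (if g x = 0 then ?T * card {y\<in>Y. h y = 0}
        else card {y\<in>Y. h y \<noteq> 0}))"
    using Y by (intro sum.cong refl) (simp add: sum.If_cases Int_def flip: sum_distrib_left)
  also have "\<dots> = card {x\<in>X. g x = 0} * (?T * card {y\<in>Y. h y = 0})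
        + card {x\<in>X. g x \<noteq> 0} * card {y\<in>Y. h y \<noteq> 0}"
    using X by (simp add: sum.If_cases Int_def)
  finally show ?thesis by (simp add: ac_simps)
qed

definition join_zero_count :: "real \<Rightarrow> real \<Rightarrow> real \<Rightarrow> real \<Rightarrow> real \<Rightarrow> real" where
  "join_zero_count t A B x y = t * x * y + (A - x) * (B - y)"

lemma card_zero_set_join:
  fixes c :: "(nat \<Rightarrow> int) \<Rightarrow> 'a::{finite,field}"
  assumes P: "int_polytope n P" "P \<subseteq> box_n n b" and Q: "int_polytope m Q" "Q \<subseteq> box_n m b'"
  shows "real (card (zero_set (n+m+1) (join n m P Q) c)) =
    join_zero_count (real (CARD('a) - 1)) (real ((CARD('a) - 1) ^ n)) (real ((CARD('a) - 1) ^ m))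
      (real (card (zero_set n P c))) (real (card (zero_set m Q (c \<circ> join_lift n m))))"
proof -
  let ?G = "poly_eval n P c" and ?H = "poly_eval m Q (c \<circ> join_lift n m)"
  have complement: "card {x\<in>torus k. F x \<noteq> 0} = (CARD('a) - 1) ^ k - card {x\<in>torus k. F x = 0}"
    for k and F :: "(nat \<Rightarrow> 'a) \<Rightarrow> 'a"
  proof -
    have "{x\<in>torus k. F x \<noteq> 0} = torus k - {x\<in>torus k. F x = 0}" by auto
    then show ?thesis by (simp add: card_Diff_subset finite_torus card_torus)
  qed
  have zero_set_join: "zero_set (n+m+1) (join n m P Q) c =
      {w \<in> torus (n+m+1). ?G (take_vec n w) + w (n+m) * ?H (slice_vec n m w) = 0}"
    unfolding zero_set_def poly_eval_join[OF P Q] ..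
  have "card (zero_set (n+m+1) (join n m P Q) c) =
      card {t \<in> (torus n \<times> torus m) \<times> (UNIV - {0}). ?G (fst (fst t)) + snd t * ?H (snd (fst t)) = 0}"
    unfolding zero_set_join by (rule bij_betw_same_card[OF bij_betw_Collect[OF bij_betw_split_torus]]) simp
  also have "\<dots> = (CARD('a) - 1) * card {x\<in>torus n. ?G x = 0} * card {y\<in>torus m. ?H y = 0}
      + card {x\<in>torus n. ?G x \<noteq> 0} * card {y\<in>torus m. ?H y \<noteq> 0}"
    by (rule card_roots_affine_combination[where g = ?G and h = ?H, OF finite_torus finite_torus])
  finally have "card (zero_set (n+m+1) (join n m P Q) c) =
      (CARD('a) - 1) * card (zero_set n P c) * card (zero_set m Q (c \<circ> join_lift n m))
      + ((CARD('a) - 1) ^ n - card (zero_set n P c)) * ((CARD('a) - 1) ^ m - card (zero_set m Q (c \<circ> join_lift n m)))"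
    unfolding complement by (simp only: zero_set_def)
  then show ?thesis
    unfolding join_zero_count_def
    using card_zero_set_le[of n P c] card_zero_set_le[of m Q "c \<circ> join_lift n m"]
    by simp
qed

section \<open>A lower bound for the number of zeros\<close>

lemma exists_ge_average_card:
  assumes D: "finite D" "D \<noteq> {}" and X: "finite X"
    and k: "\<forall>x\<in>X. k \<le> card {d\<in>D. R d x}"
  shows "\<exists>d\<in>D. k * card X \<le> card D * card {x\<in>X. R d x}"
proof (rule ccontr)
  assume "\<not> ?thesis"
  then have lt: "\<forall>d\<in>D. card D * card {x\<in>X. R d x} < k * card X" by (simp add: not_le)
  have "k * card X = (\<Sum>x\<in>X. k)" by simp
  also have "\<dots> \<le> (\<Sum>x\<in>X. card {d\<in>D. R d x})" using k by (intro sum_mono) auto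
  also have "\<dots> = (\<Sum>x\<in>X. \<Sum>d\<in>D. if R d x then 1 else 0)"
    using D by (simp add: sum.If_cases Int_def)
  also have "\<dots> = (\<Sum>d\<in>D. \<Sum>x\<in>X. if R d x then 1 else 0)" by (rule sum.swap)
  also have "\<dots> = (\<Sum>d\<in>D. card {x\<in>X. R d x})"
    using X by (simp add: sum.If_cases Int_def)
  finally have ge: "k * card X \<le> (\<Sum>d\<in>D. card {x\<in>X. R d x})" .
  have "card D * (\<Sum>d\<in>D. card {x\<in>X. R d x}) = (\<Sum>d\<in>D. card D * card {x\<in>X. R d x})"
    by (simp add: sum_distrib_left)
  also have "\<dots> < (\<Sum>d\<in>D. k * card X)" using lt D by (intro sum_strict_mono) auto
  also have "\<dots> = card D * (k * card X)" by simp
  finally show False using ge by simp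
qed

lemma card_pairs_hitting:
  assumes "finite D" "a \<in> D" "b \<in> D"
  shows "card {d \<in> D \<times> D. a = fst d \<or> b = snd d} = 2 * card D - 1"
proof -
  have "{d \<in> D \<times> D. a = fst d \<or> b = snd d} = {a} \<times> D \<union> (D - {a}) \<times> {b}"
    using assms by auto
  moreover have "card ({a} \<times> D \<union> (D - {a}) \<times> {b}) = card D + (card D - 1)"
    using assms by (subst card_Un_disjoint) (auto simp: card_cartesian_product)
  moreover have "card D \<ge> 1" using assms by (auto simp: Suc_le_eq card_gt_0_iff)
  ultimately show ?thesis by simp
qed

lemma monomial_eval_mult:
  assumes "\<forall>i<n. 0 \<le> p i" "\<forall>i<n. 0 \<le> p' i"
  shows "monomial_eval n p x * monomial_eval n p' x = (\<Prod>i<n. (x i :: 'a::field) ^ nat (p i + p' i))"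
  unfolding monomial_eval_def prod.distrib[symmetric]
  using assms by (intro prod.cong refl) (simp add: nat_add_distrib power_add)

lemma monomial_eval_parallelogram:
  assumes "\<forall>i<n. 0 \<le> p00 i" "\<forall>i<n. 0 \<le> p10 i" "\<forall>i<n. 0 \<le> p01 i" "\<forall>i<n. 0 \<le> p11 i"
    and "\<forall>i. p00 i + p11 i = p10 i + p01 i"
  shows "monomial_eval n p00 x * monomial_eval n p11 x = monomial_eval n p10 x * monomial_eval n p01 (x :: nat \<Rightarrow> 'a::field)"
  using assms by (simp add: monomial_eval_mult)

lemma card_ratio_zeros_le_max_zeros:
  fixes a b :: "'a::{finite,field}"
  assumes L: "finite (lattice_pts n P)" and pts: "{p00, p10, p01, p11} \<subseteq> lattice_pts n P"
    and p11: "p11 \<notin> {p00, p10, p01}"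
    and rel: "\<forall>x\<in>torus n. monomial_eval n p00 x * monomial_eval n p11 x =
                 monomial_eval n p10 x * (monomial_eval n p01 (x :: nat \<Rightarrow> 'a))"
  shows "card {x\<in>torus n. monomial_eval n p10 x / monomial_eval n p00 x = a \<or>
                          monomial_eval n p01 x / monomial_eval n p00 x = b}
         \<le> max_zeros TYPE('a) n P"
proof -
  define \<delta> :: "(nat \<Rightarrow> int) \<Rightarrow> (nat \<Rightarrow> int) \<Rightarrow> 'a" where "\<delta> q p = (if p = q then 1 else 0)" for q p
  \<comment> \<open>the polynomial \<open>x^p11 - b x^p10 - a x^p01 + a b x^p00\<close>; if \<open>p10 = p01\<close> the two middle terms merge\<close>
  define c where "c p = a * b * \<delta> p00 p - b * \<delta> p10 p - a * \<delta> p01 p + \<delta> p11 p" for p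
  have sum_\<delta>: "(\<Sum>p\<in>lattice_pts n P. \<delta> q p * monomial_eval n p x) = monomial_eval n q x"
    if "q \<in> lattice_pts n P" for q x
  proof -
    have "(\<Sum>p\<in>lattice_pts n P. \<delta> q p * monomial_eval n p x) =
        (\<Sum>p\<in>lattice_pts n P. if p = q then monomial_eval n p x else 0)"
      by (intro sum.cong) (auto simp: \<delta>_def)
    then show ?thesis using L that by simp
  qed
  have "zero_set n P c = {x\<in>torus n. monomial_eval n p10 x / monomial_eval n p00 x = a \<or>
                          monomial_eval n p01 x / monomial_eval n p00 x = b}"
    unfolding zero_set_def
  proof (intro Collect_cong conj_cong refl)
    fix x :: "nat \<Rightarrow> 'a" assume x: "x \<in> torus n"
    let ?mo = "monomial_eval n p00 x" and ?mx = "monomial_eval n p10 x"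
      and ?my = "monomial_eval n p01 x" and ?mxy = "monomial_eval n p11 x"
    have mo: "?mo \<noteq> 0" using monomial_eval_nonzero[OF x] .
    let ?L = "lattice_pts n P" and ?mon = "\<lambda>p. monomial_eval n p x"
    have "poly_eval n P c x = (\<Sum>p\<in>?L. a * b * (\<delta> p00 p * ?mon p) - b * (\<delta> p10 p * ?mon p)
        - a * (\<delta> p01 p * ?mon p) + \<delta> p11 p * ?mon p)"
      unfolding poly_eval_def c_def by (intro sum.cong) (simp_all add: algebra_simps)
    also have "\<dots> = a * b * (\<Sum>p\<in>?L. \<delta> p00 p * ?mon p) - b * (\<Sum>p\<in>?L. \<delta> p10 p * ?mon p)
        - a * (\<Sum>p\<in>?L. \<delta> p01 p * ?mon p) + (\<Sum>p\<in>?L. \<delta> p11 p * ?mon p)"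
      by (simp only: sum.distrib sum_subtractf sum_distrib_left)
    also have "\<dots> = a * b * ?mo - b * ?mx - a * ?my + ?mxy"
      using pts by (simp add: sum_\<delta>)
    also have "\<dots> = ?mo * ((?mx / ?mo - a) * (?my / ?mo - b))"
      using rel x mo by (simp add: field_simps)
    finally show "poly_eval n P c x = 0 \<longleftrightarrow> ?mx / ?mo = a \<or> ?my / ?mo = b"
      using mo by simp
  qed
  moreover have "c p11 \<noteq> 0" using p11 by (auto simp: c_def \<delta>_def)
  then have "card (zero_set n P c) \<le> max_zeros TYPE('a) n P"
    using pts by (intro card_zero_set_le_max_zeros) auto
  ultimately show ?thesis by simp
qed

lemma card_field_ge_2: "2 \<le> CARD('a::{finite,field})"
proof -
  have "card {0, 1::'a} \<le> CARD('a)" by (rule card_mono) auto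
  then show ?thesis by simp
qed

lemma twice_le_succ_mult:
  fixes t A N :: real
  assumes "1 \<le> t" "0 \<le> A" "(2 * t - 1) * A \<le> t\<^sup>2 * N"
  shows "2 * A \<le> (t + 1) * N"
proof -
  have "t\<^sup>2 * (2 * A) \<le> (t + 1) * ((2 * t - 1) * A)"
  proof -
    have "t\<^sup>2 * 2 \<le> (t + 1) * (2 * t - 1)" using assms(1) by (simp add: algebra_simps power2_eq_square)
    from mult_right_mono[OF this assms(2)] show ?thesis by (simp add: algebra_simps)
  qed
  also have "\<dots> \<le> (t + 1) * (t\<^sup>2 * N)" using assms by (intro mult_left_mono) auto
  finally have "t\<^sup>2 * (2 * A) \<le> t\<^sup>2 * ((t + 1) * N)" by (simp add: algebra_simps)
  moreover have "0 < t\<^sup>2" using assms(1) by simp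
  ultimately show ?thesis by (simp add: mult_le_cancel_left_pos)
qed

lemma max_zeros_ge_parallelogram:
  fixes P :: "(nat \<Rightarrow> real) set"
  assumes box: "P \<subseteq> box_n n b" and pts: "{p00, p10, p01, p11} \<subseteq> lattice_pts n P"
    and p11: "p11 \<notin> {p00, p10, p01}" and parallelogram: "\<forall>i. p00 i + p11 i = p10 i + p01 i"
  shows "2 * real ((CARD('a::{finite,field}) - 1) ^ n) \<le> real CARD('a) * real (max_zeros TYPE('a) n P)"
proof -
  define T where "T = CARD('a) - 1"
  let ?N = "max_zeros TYPE('a) n P"
  have T: "1 \<le> T" using card_field_ge_2[where 'a='a] by (simp add: T_def)
  define u1 where "u1 x = monomial_eval n p10 x / monomial_eval n p00 x" for x :: "nat \<Rightarrow> 'a"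
  define u2 where "u2 x = monomial_eval n p01 x / monomial_eval n p00 x" for x :: "nat \<Rightarrow> 'a"
  define D where "D = (UNIV :: 'a set) - {0}"
  have card_D: "card D = T" by (simp add: D_def T_def card_Diff_singleton)
  have card_torus_T: "card (torus n :: (nat \<Rightarrow> 'a) set) = T ^ n" by (simp add: T_def card_torus)
  have nonneg: "\<forall>i<n. 0 \<le> p i" if "p \<in> lattice_pts n P" for p
    using lattice_pts_box[OF box that] by auto
  have rel: "\<forall>x\<in>torus n. monomial_eval n p00 x * monomial_eval n p11 x =
      monomial_eval n p10 x * monomial_eval n p01 (x :: nat \<Rightarrow> 'a)"
    using pts parallelogram by (intro ballI monomial_eval_parallelogram) (simp_all add: nonneg)
  \<comment> \<open>double counting: each point of the torus is a zero for \<open>2 (q-1) - 1\<close> of the pairs \<open>(a, b)\<close>,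
    so some pair gives at least the average number of zeros\<close>
  have hits: "\<forall>x\<in>torus n. 2 * T - 1 \<le> card {d\<in>D \<times> D. u1 x = fst d \<or> u2 x = snd d}"
  proof
    fix x :: "nat \<Rightarrow> 'a" assume "x \<in> torus n"
    then have "u1 x \<in> D" "u2 x \<in> D"
      using monomial_eval_nonzero[OF \<open>x \<in> torus n\<close>] by (simp_all add: D_def u1_def u2_def)
    then show "2 * T - 1 \<le> card {d\<in>D \<times> D. u1 x = fst d \<or> u2 x = snd d}"
      using card_pairs_hitting[of D "u1 x" "u2 x"] by (simp add: card_D)
  qed
  have "(1, 1) \<in> D \<times> D" by (simp add: D_def)
  then have "D \<times> D \<noteq> {}" by blast
  from exists_ge_average_card[OF _ this finite_torus hits] obtain d
    where "(2 * T - 1) * card (torus n :: (nat \<Rightarrow> 'a) set)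
      \<le> card (D \<times> D) * card {x\<in>torus n. u1 x = fst d \<or> u2 x = snd d}"
    by auto
  also have "card {x\<in>torus n. u1 x = fst d \<or> u2 x = snd d} \<le> ?N"
    unfolding u1_def u2_def using box pts p11 rel
    by (intro card_ratio_zeros_le_max_zeros finite_lattice_pts)
  finally have "(2 * T - 1) * T ^ n \<le> T\<^sup>2 * ?N"
    by (simp add: card_torus_T card_D power2_eq_square mult_le_mono2)
  then have "real (2 * T - 1) * real (T ^ n) \<le> (real T)\<^sup>2 * real ?N"
    by (metis of_nat_le_iff of_nat_mult of_nat_power)
  moreover have "real (2 * T - 1) = 2 * real T - 1" using T by simp
  ultimately have "(2 * real T - 1) * real (T ^ n) \<le> (real T)\<^sup>2 * real ?N" by simp
  from twice_le_succ_mult[OF _ _ this] T show ?thesis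
    by (simp add: T_def)
qed

section \<open>Unimodular images of the segment and the square\<close>

lemma unimodular_left_inverse:
  assumes "unimodular n M"
  obtains M' where "\<forall>i<n. \<forall>j<n. (\<Sum>k<n. real_of_int (M' i k) * real_of_int (M k j)) = (if i = j then 1 else 0)"
proof -
  from assms obtain M' where M': "\<forall>i<n. \<forall>j<n. (\<Sum>k<n. M i k * M' k j) = (if i = j then 1 else 0)"
    unfolding unimodular_def by blast
  define A where "A = mat n n (\<lambda>(i,j). real_of_int (M i j))"
  define B where "B = mat n n (\<lambda>(i,j). real_of_int (M' i j))"
  have "A * B = 1\<^sub>m n"
  proof (rule eq_matI)
    fix i j assume "i < dim_row (1\<^sub>m n :: real mat)" "j < dim_col (1\<^sub>m n :: real mat)"
    then have ij: "i < n" "j < n" by auto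
    then have "(A * B) $$ (i,j) = real_of_int (\<Sum>k<n. M i k * M' k j)"
      by (simp add: A_def B_def scalar_prod_def lessThan_atLeast0)
    then show "(A * B) $$ (i,j) = 1\<^sub>m n $$ (i,j)" using M' ij by simp
  qed (auto simp: A_def B_def)
  then have BA: "B * A = 1\<^sub>m n"
    by (rule mat_mult_left_right_inverse[rotated 2]) (auto simp: A_def B_def)
  show ?thesis
  proof (rule that[of M'], intro allI impI)
    fix i j assume ij: "i < n" "j < n"
    have "(B * A) $$ (i,j) = (\<Sum>k<n. real_of_int (M' i k) * real_of_int (M k j))"
      using ij by (simp add: A_def B_def scalar_prod_def lessThan_atLeast0)
    then show "(\<Sum>k<n. real_of_int (M' i k) * real_of_int (M k j)) = (if i = j then 1 else 0)"
      using BA ij by simp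
  qed
qed

lemma unimodular_kernel_trivial:
  assumes "unimodular n M" "\<forall>i<n. (\<Sum>j<n. real_of_int (M i j) * x j) = 0" "k < n"
  shows "x k = 0"
proof -
  obtain M' where M': "\<forall>i<n. \<forall>j<n. (\<Sum>l<n. real_of_int (M' i l) * real_of_int (M l j)) = (if i = j then 1 else 0)"
    using unimodular_left_inverse[OF assms(1)] by blast
  have "x k = (\<Sum>j<n. if k = j then x j else 0)" using assms(3) by simp
  also have "\<dots> = (\<Sum>j<n. (if k = j then 1 else 0) * x j)" by (intro sum.cong) auto
  also have "\<dots> = (\<Sum>j<n. (\<Sum>l<n. real_of_int (M' k l) * real_of_int (M l j)) * x j)"
    using M' assms(3) by (intro sum.cong refl) simp
  also have "\<dots> = (\<Sum>j<n. \<Sum>l<n. real_of_int (M' k l) * (real_of_int (M l j) * x j))"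
    by (simp only: sum_distrib_right mult.assoc)
  also have "\<dots> = (\<Sum>l<n. \<Sum>j<n. real_of_int (M' k l) * (real_of_int (M l j) * x j))"
    by (rule sum.swap)
  also have "\<dots> = (\<Sum>l<n. real_of_int (M' k l) * (\<Sum>j<n. real_of_int (M l j) * x j))"
    by (simp only: sum_distrib_left)
  also have "\<dots> = 0" using assms(2) by simp
  finally show ?thesis .
qed

definition plane_vec :: "int \<Rightarrow> int \<Rightarrow> nat \<Rightarrow> real" where
  "plane_vec a b = (\<lambda>i. if i = 0 then real_of_int a else if i = 1 then real_of_int b else 0)"

definition aff_pt :: "nat \<Rightarrow> (nat \<Rightarrow> nat \<Rightarrow> int) \<Rightarrow> (nat \<Rightarrow> int) \<Rightarrow> int \<Rightarrow> int \<Rightarrow> nat \<Rightarrow> int" where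
  "aff_pt n M lam a b = (\<lambda>i. if i < n then lam i + a * M i 0 + b * M i 1 else 0)"

lemma sum_plane_vec:
  fixes f :: "nat \<Rightarrow> real"
  assumes "1 \<le> n" "b = 0 \<or> 2 \<le> n"
  shows "(\<Sum>j<n. f j * plane_vec a b j) = f 0 * real_of_int a + f 1 * real_of_int b"
proof -
  have "(\<Sum>j<n. f j * plane_vec a b j) =
      (\<Sum>j<n. (if j = 0 then f 0 * a else 0) + (if j = 1 then f 1 * b else 0))"
    by (intro sum.cong) (auto simp: plane_vec_def)
  also have "\<dots> = (\<Sum>j<n. if j = 0 then f 0 * a else 0) + (\<Sum>j<n. if j = 1 then f 1 * b else 0)"
    by (rule sum.distrib)
  also have "\<dots> = f 0 * real_of_int a + f 1 * real_of_int b" using assms by auto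
  finally show ?thesis .
qed

lemma aff_map_plane_vec:
  assumes "1 \<le> n" "b = 0 \<or> 2 \<le> n"
  shows "aff_map n M lam (plane_vec a b) = rvec (aff_pt n M lam a b)"
  using sum_plane_vec[OF assms] by (auto simp: aff_map_def aff_pt_def rvec_def ac_simps)

lemma aff_pt_inj:
  assumes U: "unimodular n M" and n: "1 \<le> n" "b = b' \<or> 2 \<le> n" and ab: "(a, b) \<noteq> (a', b')"
  shows "aff_pt n M lam a b \<noteq> aff_pt n M lam a' b'"
proof
  assume eq: "aff_pt n M lam a b = aff_pt n M lam a' b'"
  have "\<forall>i<n. (\<Sum>j<n. real_of_int (M i j) * plane_vec (a - a') (b - b') j) = 0"
  proof (intro allI impI)
    fix i assume "i < n"
    then have "(a - a') * M i 0 + (b - b') * M i 1 = 0"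
      using fun_cong[OF eq, of i] by (simp add: aff_pt_def algebra_simps)
    then show "(\<Sum>j<n. real_of_int (M i j) * plane_vec (a - a') (b - b') j) = 0"
      using n by (subst sum_plane_vec) (auto simp: algebra_simps simp flip: of_int_mult of_int_add)
  qed
  then have "plane_vec (a - a') (b - b') k = 0" if "k < n" for k
    using unimodular_kernel_trivial[OF U] that by blast
  from this[of 0] this[of 1] show False using n ab by (auto simp: plane_vec_def)
qed

lemma plane_vec_in_seg2: "a \<in> {0, 1, 2} \<Longrightarrow> plane_vec a 0 \<in> seg2"
proof -
  let ?ends = "{(\<lambda>i. 0), (\<lambda>i. 2 * unit_vec 0 i)} :: (nat \<Rightarrow> real) set"
  have ends: "plane_vec 0 0 = (\<lambda>i. 0)" "plane_vec 2 0 = (\<lambda>i. 2 * unit_vec 0 i)"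
    by (auto simp: plane_vec_def unit_vec_def)
  have "(\<lambda>i::nat. 0::real) \<noteq> (\<lambda>i. 2 * unit_vec 0 i)"
    by (metis unit_vec_def zero_neq_numeral mult_cancel_left1)
  then have "plane_vec 1 0 \<in> rconv ?ends"
    unfolding rconv_def
    by (intro CollectI exI[of _ ?ends] exI[of _ "\<lambda>_. 1 / 2"]) (auto simp: plane_vec_def unit_vec_def)
  moreover assume "a \<in> {0, 1, 2}"
  ultimately show ?thesis
    unfolding seg2_def using ends by (auto intro: rconv_inc)
qed

lemma plane_vec_in_unit_square: "a \<in> {0, 1} \<Longrightarrow> b \<in> {0, 1} \<Longrightarrow> plane_vec a b \<in> unit_square"
  unfolding unit_square_def by (rule rconv_inc) (auto simp: plane_vec_def unit_vec_def fun_eq_iff)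

lemma contains_seg_or_square_parallelogram:
  assumes "contains_seg_or_square n P"
  obtains p00 p10 p01 p11 where "{p00, p10, p01, p11} \<subseteq> lattice_pts n P" "p11 \<notin> {p00, p10, p01}"
    "\<forall>i. p00 i + p11 i = p10 i + p01 i"
proof -
  from assms obtain M lam where U: "unimodular n M" and cases:
    "(1 \<le> n \<and> aff_map n M lam ` seg2 \<subseteq> P) \<or> (2 \<le> n \<and> aff_map n M lam ` unit_square \<subseteq> P)"
    unfolding contains_seg_or_square_def by blast
  let ?p = "aff_pt n M lam"
  have lattice: "?p a b \<in> lattice_pts n P"
    if "1 \<le> n" "b = 0 \<or> 2 \<le> n" "plane_vec a b \<in> S" "aff_map n M lam ` S \<subseteq> P" for a b S
    using that aff_map_plane_vec[OF that(1,2), of M lam a] by (auto simp: lattice_pts_def aff_pt_def)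
  from cases show thesis
  proof
    assume seg: "1 \<le> n \<and> aff_map n M lam ` seg2 \<subseteq> P"
    show thesis
    proof (rule that[of "?p 0 0" "?p 1 0" "?p 1 0" "?p 2 0"])
      show "{?p 0 0, ?p 1 0, ?p 1 0, ?p 2 0} \<subseteq> lattice_pts n P"
        using seg by (auto intro!: lattice plane_vec_in_seg2)
      show "?p 2 0 \<notin> {?p 0 0, ?p 1 0, ?p 1 0}"
        using seg aff_pt_inj[OF U] by auto
      show "\<forall>i. ?p 0 0 i + ?p 2 0 i = ?p 1 0 i + ?p 1 0 i"
        by (simp add: aff_pt_def)
    qed
  next
    assume square: "2 \<le> n \<and> aff_map n M lam ` unit_square \<subseteq> P"
    show thesis
    proof (rule that[of "?p 0 0" "?p 1 0" "?p 0 1" "?p 1 1"])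
      show "{?p 0 0, ?p 1 0, ?p 0 1, ?p 1 1} \<subseteq> lattice_pts n P"
        using square by (auto intro!: lattice plane_vec_in_unit_square)
      show "?p 1 1 \<notin> {?p 0 0, ?p 1 0, ?p 0 1}"
        using square aff_pt_inj[OF U] by auto
      show "\<forall>i. ?p 0 0 i + ?p 1 1 i = ?p 1 0 i + ?p 0 1 i"
        by (simp add: aff_pt_def)
    qed
  qed
qed

lemma max_zeros_lower_bound:
  assumes "P \<subseteq> box_n n b" "contains_seg_or_square n P"
  shows "lattice_pts n P \<noteq> {}"
    and "2 * real ((CARD('a::{finite,field}) - 1) ^ n) \<le> real CARD('a) * real (max_zeros TYPE('a) n P)"
proof -
  obtain p00 p10 p01 p11 where "{p00, p10, p01, p11} \<subseteq> lattice_pts n P" "p11 \<notin> {p00, p10, p01}"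
    "\<forall>i. p00 i + p11 i = p10 i + p01 i"
    by (rule contains_seg_or_square_parallelogram[OF assms(2)])
  then show "lattice_pts n P \<noteq> {}"
    and "2 * real ((CARD('a) - 1) ^ n) \<le> real CARD('a) * real (max_zeros TYPE('a) n P)"
    by (blast, rule max_zeros_ge_parallelogram[OF assms(1)])
qed

section \<open>The maximal number of zeros on the join\<close>

lemma affine_le_max_endpoints:
  fixes x a s c :: real
  assumes "0 \<le> x" "x \<le> a"
  shows "x * s + c \<le> max (0 * s + c) (a * s + c)"
proof (cases "0 \<le> s")
  case True
  then show ?thesis using mult_right_mono[OF assms(2) True] by simp
next
  case False
  then show ?thesis using mult_nonneg_nonpos[OF assms(1), of s] by simp
qed

lemma join_zero_count_le_corner:
  fixes t A B a b x y :: real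
  assumes "0 \<le> x" "x \<le> a" "a \<le> A" "0 \<le> y" "y \<le> b" "b \<le> B" "0 \<le> t"
    and corner: "A * B \<le> join_zero_count t A B a b"
  shows "join_zero_count t A B x y \<le> join_zero_count t A B a b"
proof -
  let ?F = "join_zero_count t A B"
  have affine_x: "?F x' y' = x' * ((t + 1) * y' - B) + A * (B - y')" for x' y'
    by (simp add: join_zero_count_def algebra_simps)
  have affine_y: "?F x' y' = y' * ((t + 1) * x' - A) + B * (A - x')" for x' y'
    by (simp add: join_zero_count_def algebra_simps)
  have "?F x y \<le> max (?F 0 y) (?F a y)"
    unfolding affine_x using affine_le_max_endpoints[OF assms(1,2)] by simp
  moreover have "?F a y \<le> max (?F a 0) (?F a b)"
    unfolding affine_y using affine_le_max_endpoints[OF assms(4,5)] by simp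
  moreover have "?F 0 y \<le> A * B" "?F a 0 \<le> A * B"
    using assms by (auto simp: join_zero_count_def algebra_simps intro: mult_left_mono mult_right_mono)
  ultimately show ?thesis using corner by linarith
qed

lemma join_zero_count_le_max_corners:
  fixes t A B a b x y :: real
  assumes "0 \<le> x" "x \<le> A" "0 \<le> y" "y \<le> B" "0 \<le> a" "a \<le> A" "0 \<le> b" "b \<le> B" "0 \<le> t"
    and corner: "A * B \<le> join_zero_count t A B a b"
    and "x \<le> a \<and> y \<le> b \<or> x \<le> a \<and> y = B \<or> x = A \<and> y \<le> b"
  shows "join_zero_count t A B x y
    \<le> max (max (join_zero_count t A B a B) (join_zero_count t A B A b)) (join_zero_count t A B a b)"
  using assms(11)
proof (elim disjE conjE)
  assume "x \<le> a" "y \<le> b"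
  then show ?thesis using join_zero_count_le_corner[of x a A y b B t] assms by simp
next
  assume "x \<le> a" "y = B"
  then have "join_zero_count t A B x y \<le> join_zero_count t A B a B"
    using assms by (simp add: join_zero_count_def mult_right_mono mult_left_mono)
  then show ?thesis by simp
next
  assume "x = A" "y \<le> b"
  then have "join_zero_count t A B x y \<le> join_zero_count t A B A b"
    using assms by (simp add: join_zero_count_def mult_left_mono)
  then show ?thesis by simp
qed

lemma prod_le_join_zero_count:
  fixes t A B a b :: real
  assumes "0 \<le> a" "0 \<le> b" "2 * A \<le> (t + 1) * a" "2 * B \<le> (t + 1) * b"
  shows "A * B \<le> join_zero_count t A B a b"
proof -
  have "b * (2 * A) \<le> b * ((t + 1) * a)" "a * (2 * B) \<le> a * ((t + 1) * b)"
    using assms by (auto intro: mult_left_mono)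
  then show ?thesis by (simp add: join_zero_count_def algebra_simps)
qed

lemma join_zero_count_le_max_zeros_join:
  fixes c1 c2 :: "(nat \<Rightarrow> int) \<Rightarrow> 'a::{finite,field}"
  assumes P: "int_polytope n P" "P \<subseteq> box_n n b" and Q: "int_polytope m Q" "Q \<subseteq> box_n m b'"
    and nonzero: "(\<exists>p\<in>lattice_pts n P. c1 p \<noteq> 0) \<or> (\<exists>q\<in>lattice_pts m Q. c2 q \<noteq> 0)"
  shows "join_zero_count (real (CARD('a) - 1)) (real ((CARD('a) - 1) ^ n)) (real ((CARD('a) - 1) ^ m))
           (real (card (zero_set n P c1))) (real (card (zero_set m Q c2)))
         \<le> real (max_zeros TYPE('a) (n+m+1) (join n m P Q))"
proof -
  define c where "c r = (if r (n+m) = 1 then c2 (slice_vec n m r) else c1 r)" for r :: "nat \<Rightarrow> int"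
  have P0: "p (n+m) = 0" if "p \<in> lattice_pts n P" for p
    using lattice_pts_box[OF P(2) that] by simp
  have Q0: "\<forall>i\<ge>m. q i = 0" if "q \<in> lattice_pts m Q" for q
    using lattice_pts_box[OF Q(2) that] by simp
  have c_P: "c p = c1 p" if "p \<in> lattice_pts n P" for p
    using P0[OF that] by (simp add: c_def)
  have c_Q: "(c \<circ> join_lift n m) q = c2 q" if "q \<in> lattice_pts m Q" for q
    using Q0[OF that] by (simp add: c_def slice_vec_join_vec) (simp add: join_vec_def)
  have "\<exists>r\<in>lattice_pts n P \<union> join_lift n m ` lattice_pts m Q. c r \<noteq> 0"
    using nonzero
  proof
    assume "\<exists>p\<in>lattice_pts n P. c1 p \<noteq> 0"
    then obtain p where "p \<in> lattice_pts n P" "c p \<noteq> 0" using c_P by fastforce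
    then show ?thesis by blast
  next
    assume "\<exists>q\<in>lattice_pts m Q. c2 q \<noteq> 0"
    then obtain q where "q \<in> lattice_pts m Q" "c (join_lift n m q) \<noteq> 0"
      using c_Q by fastforce
    then show ?thesis by blast
  qed
  then have "\<exists>r\<in>lattice_pts (n+m+1) (join n m P Q). c r \<noteq> 0"
    unfolding lattice_pts_join[OF P Q] .
  then have "card (zero_set (n+m+1) (join n m P Q) c) \<le> max_zeros TYPE('a) (n+m+1) (join n m P Q)"
    by (rule card_zero_set_le_max_zeros)
  then show ?thesis
    using card_zero_set_join[OF P Q, of c] zero_set_cong[of n P c c1] zero_set_cong[of m Q "c \<circ> join_lift n m" c2]
      c_P c_Q by simp
qed

lemma max_zeros_join_le:
  fixes n m :: nat and P Q :: "(nat \<Rightarrow> real) set"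
  defines "T \<equiv> real (CARD('a::{finite,field}) - 1)"
    and "A \<equiv> real ((CARD('a) - 1) ^ n)" and "B \<equiv> real ((CARD('a) - 1) ^ m)"
    and "a \<equiv> real (max_zeros TYPE('a) n P)" and "b \<equiv> real (max_zeros TYPE('a) m Q)"
  assumes P: "int_polytope n P" "P \<subseteq> box_n n r" "lattice_pts n P \<noteq> {}"
    and Q: "int_polytope m Q" "Q \<subseteq> box_n m r'" "lattice_pts m Q \<noteq> {}"
    and corner: "A * B \<le> join_zero_count T A B a b"
  shows "real (max_zeros TYPE('a) (n+m+1) (join n m P Q))
    \<le> max (max (join_zero_count T A B a B) (join_zero_count T A B A b)) (join_zero_count T A B a b)"
proof -
  let ?J = "join n m P Q"
  have "lattice_pts (n+m+1) ?J \<noteq> {}"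
    using P(3) unfolding lattice_pts_join[OF P(1,2) Q(1,2)] by blast
  then obtain c :: "(nat \<Rightarrow> int) \<Rightarrow> 'a" where c: "\<exists>r\<in>lattice_pts (n+m+1) ?J. c r \<noteq> 0"
    "card (zero_set (n+m+1) ?J c) = max_zeros TYPE('a) (n+m+1) ?J"
    by (rule max_zeros_attained)
  define x where "x = real (card (zero_set n P c))"
  define y where "y = real (card (zero_set m Q (c \<circ> join_lift n m)))"
  have count: "real (max_zeros TYPE('a) (n+m+1) ?J) = join_zero_count T A B x y"
    using card_zero_set_join[OF P(1,2) Q(1,2), of c] c(2) by (simp add: T_def A_def B_def x_def y_def)
  have bounds: "0 \<le> x" "x \<le> A" "0 \<le> y" "y \<le> B"
    unfolding x_def y_def A_def B_def by (simp_all only: of_nat_0_le_iff of_nat_le_iff card_zero_set_le)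
  have x: "x \<le> a" if "\<exists>p\<in>lattice_pts n P. c p \<noteq> 0"
    using card_zero_set_le_max_zeros[OF that] by (simp add: x_def a_def)
  have y: "y \<le> b" if "\<exists>q\<in>lattice_pts m Q. (c \<circ> join_lift n m) q \<noteq> 0"
    using card_zero_set_le_max_zeros[OF that] by (simp add: y_def b_def comp_def)
  have x_A: "x = A" if "\<not> (\<exists>p\<in>lattice_pts n P. c p \<noteq> 0)"
    using that zero_set_zero[of n P c] by (simp add: x_def A_def card_torus)
  have y_B: "y = B" if "\<not> (\<exists>q\<in>lattice_pts m Q. (c \<circ> join_lift n m) q \<noteq> 0)"
    using that zero_set_zero[of m Q "c \<circ> join_lift n m"] by (simp add: y_def B_def card_torus)
  have corner_bounds: "0 \<le> a" "a \<le> A" "0 \<le> b" "b \<le> B" "0 \<le> T"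
    unfolding a_def b_def A_def B_def T_def
    by (simp_all only: of_nat_0_le_iff of_nat_le_iff max_zeros_le[OF P(3)] max_zeros_le[OF Q(3)])
  have "(\<exists>p\<in>lattice_pts n P. c p \<noteq> 0) \<or> (\<exists>q\<in>lattice_pts m Q. (c \<circ> join_lift n m) q \<noteq> 0)"
    using c(1) unfolding lattice_pts_join[OF P(1,2) Q(1,2)] by auto
  then have "x \<le> a \<and> y \<le> b \<or> x \<le> a \<and> y = B \<or> x = A \<and> y \<le> b"
    using x y x_A y_B by blast
  then show ?thesis
    unfolding count by (rule join_zero_count_le_max_corners[OF bounds corner_bounds corner])
qed

lemma max_zeros_join:
  fixes n m :: nat and P Q :: "(nat \<Rightarrow> real) set"
  defines "T \<equiv> real (CARD('a::{finite,field}) - 1)"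
    and "A \<equiv> real ((CARD('a) - 1) ^ n)" and "B \<equiv> real ((CARD('a) - 1) ^ m)"
    and "a \<equiv> real (max_zeros TYPE('a) n P)" and "b \<equiv> real (max_zeros TYPE('a) m Q)"
  assumes P: "int_polytope n P" "P \<subseteq> box_n n r" "lattice_pts n P \<noteq> {}"
    and Q: "int_polytope m Q" "Q \<subseteq> box_n m r'" "lattice_pts m Q \<noteq> {}"
    and corner: "A * B \<le> join_zero_count T A B a b"
  shows "real (max_zeros TYPE('a) (n+m+1) (join n m P Q))
    = max (max (join_zero_count T A B a B) (join_zero_count T A B A b)) (join_zero_count T A B a b)"
proof (rule antisym)
  show "real (max_zeros TYPE('a) (n+m+1) (join n m P Q))
      \<le> max (max (join_zero_count T A B a B) (join_zero_count T A B A b)) (join_zero_count T A B a b)"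
    using max_zeros_join_le[OF P Q] corner by (simp add: T_def A_def B_def a_def b_def)
  obtain cP :: "(nat \<Rightarrow> int) \<Rightarrow> 'a" where cP: "\<exists>p\<in>lattice_pts n P. cP p \<noteq> 0" "card (zero_set n P cP) = max_zeros TYPE('a) n P"
    using max_zeros_attained[OF P(3)] by blast
  obtain cQ :: "(nat \<Rightarrow> int) \<Rightarrow> 'a" where cQ: "\<exists>q\<in>lattice_pts m Q. cQ q \<noteq> 0" "card (zero_set m Q cQ) = max_zeros TYPE('a) m Q"
    using max_zeros_attained[OF Q(3)] by blast
  have "card (zero_set k R (\<lambda>_. 0 :: 'a)) = (CARD('a) - 1) ^ k" for k R
    by (simp add: zero_set_zero card_torus)
  then have "join_zero_count T A B a B \<le> real (max_zeros TYPE('a) (n+m+1) (join n m P Q))"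
    and "join_zero_count T A B A b \<le> real (max_zeros TYPE('a) (n+m+1) (join n m P Q))"
    and "join_zero_count T A B a b \<le> real (max_zeros TYPE('a) (n+m+1) (join n m P Q))"
    using join_zero_count_le_max_zeros_join[OF P(1,2) Q(1,2), of cP "\<lambda>_. 0"]
      join_zero_count_le_max_zeros_join[OF P(1,2) Q(1,2), of "\<lambda>_. 0" cQ]
      join_zero_count_le_max_zeros_join[OF P(1,2) Q(1,2), of cP cQ] cP cQ
    by (simp_all add: T_def A_def B_def a_def b_def)
  then show "max (max (join_zero_count T A B a B) (join_zero_count T A B A b)) (join_zero_count T A B a b)
      \<le> real (max_zeros TYPE('a) (n+m+1) (join n m P Q))" by simp
qed

lemma relative_distance_max:
  fixes K x y :: real
  assumes "0 < K"
  shows "(K - max x y) / K = min ((K - x) / K) ((K - y) / K)"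
proof -
  have antitone: "(K - v) / K \<le> (K - u) / K" if "u \<le> v" for u v
    using assms that by (simp add: divide_right_mono)
  show ?thesis
    by (cases "x \<le> y") (simp_all add: antitone)
qed

lemma join_relative_distance:
  fixes t A B a b :: real
  assumes "0 < t" "0 < A" "0 < B"
  shows "(t * A * B - max (max (join_zero_count t A B a B) (join_zero_count t A B A b)) (join_zero_count t A B a b))
           / (t * A * B)
       = Min {(A - a) / A, (B - b) / B, (A - a) / A + (B - b) / B - (A - a) / A * ((B - b) / B) * (t + 1) / t}"
proof -
  have "t * A * B > 0" using assms by simp
  moreover have "(t * A * B - join_zero_count t A B a B) / (t * A * B) = (A - a) / A"
    and "(t * A * B - join_zero_count t A B A b) / (t * A * B) = (B - b) / B"
    and "(t * A * B - join_zero_count t A B a b) / (t * A * B) =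
       (A - a) / A + (B - b) / B - (A - a) / A * ((B - b) / B) * (t + 1) / t"
    using assms by (simp_all add: join_zero_count_def field_simps)
  ultimately show ?thesis by (simp add: relative_distance_max min.assoc)
qed

lemma card_torus_prod_le_join_zero_count:
  assumes P: "P \<subseteq> box_n n r" "contains_seg_or_square n P"
    and Q: "Q \<subseteq> box_n m r'" "contains_seg_or_square m Q"
  shows "real ((CARD('a::{finite,field}) - 1) ^ n) * real ((CARD('a) - 1) ^ m)
    \<le> join_zero_count (real (CARD('a) - 1)) (real ((CARD('a) - 1) ^ n)) (real ((CARD('a) - 1) ^ m))
         (real (max_zeros TYPE('a) n P)) (real (max_zeros TYPE('a) m Q))"
proof (rule prod_le_join_zero_count)
  have "real CARD('a) = real (CARD('a) - 1) + 1"
    using card_field_ge_2[where 'a='a] by simp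
  then show "2 * real ((CARD('a) - 1) ^ n) \<le> (real (CARD('a) - 1) + 1) * real (max_zeros TYPE('a) n P)"
    and "2 * real ((CARD('a) - 1) ^ m) \<le> (real (CARD('a) - 1) + 1) * real (max_zeros TYPE('a) m Q)"
    using max_zeros_lower_bound(2)[OF P] max_zeros_lower_bound(2)[OF Q] by simp_all
qed simp_all

theorem mainTheorem6:
  fixes n m :: nat and P Q :: "(nat \<Rightarrow> real) set"
  assumes q3: "CARD('a::{finite,field}) \<ge> 3"
    and P: "int_polytope n P" "P \<subseteq> box_n n (real CARD('a) - 2)" "contains_seg_or_square n P"
    and Q: "int_polytope m Q" "Q \<subseteq> box_n m (real CARD('a) - 2)" "contains_seg_or_square m Q"
  shows "(real ((CARD('a) - 1) ^ (n + m)) \<le>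
           real (CARD('a) - 1) * real (max_zeros TYPE('a) n P) * real (max_zeros TYPE('a) m Q)
           + (real ((CARD('a) - 1) ^ n) - real (max_zeros TYPE('a) n P))
             * (real ((CARD('a) - 1) ^ m) - real (max_zeros TYPE('a) m Q)))
         \<and> (min_dist TYPE('a) (n + m + 1) (join n m P Q) =
           Min {min_dist TYPE('a) n P, min_dist TYPE('a) m Q,
                min_dist TYPE('a) n P + min_dist TYPE('a) m Q
                - min_dist TYPE('a) n P * min_dist TYPE('a) m Q * real CARD('a) / real (CARD('a) - 1)})"
proof -
  define T where "T = real (CARD('a) - 1)"
  define A where "A = real ((CARD('a) - 1) ^ n)"
  define B where "B = real ((CARD('a) - 1) ^ m)"
  define a where "a = real (max_zeros TYPE('a) n P)"
  define b where "b = real (max_zeros TYPE('a) m Q)"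
  have pos: "0 < T" "0 < A" "0 < B" and card: "real CARD('a) = T + 1"
    using q3 by (simp_all add: T_def A_def B_def)
  have corner: "A * B \<le> join_zero_count T A B a b"
    unfolding T_def A_def B_def a_def b_def by (rule card_torus_prod_le_join_zero_count[OF P(2,3) Q(2,3)])
  have N_join: "real (max_zeros TYPE('a) (n+m+1) (join n m P Q))
      = max (max (join_zero_count T A B a B) (join_zero_count T A B A b)) (join_zero_count T A B a b)"
    using max_zeros_join[OF P(1,2) max_zeros_lower_bound(1)[OF P(2,3)] Q(1,2) max_zeros_lower_bound(1)[OF Q(2,3)]]
      corner unfolding T_def A_def B_def a_def b_def by blast
  have "min_dist TYPE('a) (n+m+1) (join n m P Q)
      = (T * A * B - real (max_zeros TYPE('a) (n+m+1) (join n m P Q))) / (T * A * B)"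
    by (simp add: min_dist_def T_def A_def B_def power_add mult_ac)
  also have "\<dots> = Min {(A - a) / A, (B - b) / B, (A - a) / A + (B - b) / B - (A - a) / A * ((B - b) / B) * (T + 1) / T}"
    unfolding N_join by (rule join_relative_distance[OF pos])
  finally have dist_join: "min_dist TYPE('a) (n+m+1) (join n m P Q) = \<dots>" .
  have dist_P: "min_dist TYPE('a) n P = (A - a) / A" and dist_Q: "min_dist TYPE('a) m Q = (B - b) / B"
    by (simp_all add: min_dist_def A_def B_def a_def b_def)
  show ?thesis
    unfolding dist_join dist_P dist_Q card T_def[symmetric] using corner
    by (simp add: A_def B_def a_def b_def join_zero_count_def power_add)
qed

end
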